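(* The finite separable extension $K_R/K$ has exactly one upper ramification break, namely $\mathcal U_{K_R/K}=\left\{\frac{R}{q-1}\right\}$.
   Context: Let $p$ be a prime and $K$ a complete discrete valuation field of characteristic $p$ with algebraically closed residue field, normalized valuation $v_K$; fix $t\in K$ with $v_K(t)=-1$. Let $q$ be a power of $p$ and $R$ a positive integer prime to $p$, and let $K_R=K(T)$ be the extension defined by $T^q+T^{q-1}=t^R$ (it is separable of degree $q$ over $K$). For a finite separable (not necessarily Galois) extension $M/F$ of complete discrete valuation fields, the set $\mathcal U_{M/F}$ of upper ramification breaks is defined via Deligne's upper numbering filtration on the set of $F$-embeddings of $M$ into a separable closure (Deligne, "Les corps locaux de caractéristique p, limites de corps locaux de caractéristique 0", Appendice); equivalently, it is the set of rationals $x>-1$ at which the Herbrand function $\psi_{M/F}$ is not differentiable. *)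

theory Defs
  imports Complex_Main "HOL-Computational_Algebra.Polynomial" "HOL-Library.Extended_Real"
begin

text \<open>The ambient type 'a (all of it) plays the role of a separable closure of K.
  Valuations take values in ereal, with v 0 = infinity.\<close>

definition is_subfield :: "'a::field set \<Rightarrow> bool" where
  "is_subfield F \<longleftrightarrow> 0 \<in> F \<and> 1 \<in> F \<and> (\<forall>a\<in>F. \<forall>b\<in>F. a + b \<in> F \<and> a * b \<in> F)
     \<and> (\<forall>a\<in>F. - a \<in> F \<and> inverse a \<in> F)"

definition is_valuation :: "('a::field \<Rightarrow> ereal) \<Rightarrow> bool" where
  "is_valuation v \<longleftrightarrow> (\<forall>x. v x = \<infinity> \<longleftrightarrow> x = 0) \<and> (\<forall>x. v x \<noteq> - \<infinity>)
     \<and> (\<forall>x y. v (x * y) = v x + v y) \<and> (\<forall>x y. min (v x) (v y) \<le> v (x + y))"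

definition normalized_discrete_on :: "('a::field \<Rightarrow> ereal) \<Rightarrow> 'a set \<Rightarrow> bool" where
  "normalized_discrete_on v K \<longleftrightarrow> v ` (K - {0}) = range (\<lambda>k::int. ereal (of_int k))"

definition complete_on :: "('a::field \<Rightarrow> ereal) \<Rightarrow> 'a set \<Rightarrow> bool" where
  "complete_on v K \<longleftrightarrow> (\<forall>x::nat \<Rightarrow> 'a. (\<forall>n. x n \<in> K) \<and>
      (\<forall>N::nat. \<exists>M. \<forall>m\<ge>M. \<forall>n\<ge>M. ereal (of_nat N) \<le> v (x m - x n))
      \<longrightarrow> (\<exists>y\<in>K. \<forall>N::nat. \<exists>M. \<forall>n\<ge>M. ereal (of_nat N) \<le> v (x n - y)))"

text \<open>Residue field O_K/m_K algebraically closed: every monic nonconstant polynomial over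
  O_K has a root modulo m_K.\<close>
definition residue_alg_closed :: "('a::field \<Rightarrow> ereal) \<Rightarrow> 'a set \<Rightarrow> bool" where
  "residue_alg_closed v K \<longleftrightarrow> (\<forall>P::'a poly. (\<forall>i. coeff P i \<in> K \<and> 0 \<le> v (coeff P i))
      \<and> 1 \<le> degree P \<and> lead_coeff P = 1 \<longrightarrow> (\<exists>a\<in>K. 0 \<le> v a \<and> 0 < v (poly P a)))"

definition separable_poly :: "'a::field poly \<Rightarrow> bool" where
  "separable_poly P \<longleftrightarrow> P \<noteq> 0 \<and> (\<forall>Q. Q dvd P \<and> Q dvd pderiv P \<longrightarrow> degree Q = 0)"

definition separable_closure :: "'a::field set \<Rightarrow> bool" where
  "separable_closure K \<longleftrightarrow> is_subfield K
     \<and> (\<forall>x::'a. \<exists>P. (\<forall>i. coeff P i \<in> K) \<and> separable_poly P \<and> poly P x = 0)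
     \<and> (\<forall>P::'a poly. 1 \<le> degree P \<and> separable_poly P \<longrightarrow> (\<exists>x. poly P x = 0))"

definition gen_field :: "'a::field set \<Rightarrow> 'a \<Rightarrow> 'a set" where
  "gen_field K T = \<Inter> {F. is_subfield F \<and> K \<subseteq> F \<and> T \<in> F}"

definition embeddings :: "'a::field set \<Rightarrow> 'a set \<Rightarrow> ('a \<Rightarrow> 'a) set" where
  "embeddings K M = {\<sigma>. (\<forall>a\<in>M. \<forall>b\<in>M. \<sigma> (a + b) = \<sigma> a + \<sigma> b \<and> \<sigma> (a * b) = \<sigma> a * \<sigma> b)
      \<and> (\<forall>a\<in>K. \<sigma> a = a) \<and> (\<forall>x. x \<notin> M \<longrightarrow> \<sigma> x = undefined)}"

definition ram_index :: "('a::field \<Rightarrow> ereal) \<Rightarrow> 'a set \<Rightarrow> nat" where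
  "ram_index v M = (THE e::nat. 0 < e \<and>
      v ` (M - {0}) = range (\<lambda>k::int. ereal (of_int k / of_nat e)))"

text \<open>i(sigma) = v_M-normalized inf over the valuation ring O_M of v(sigma a - a).\<close>
definition lower_index :: "('a::field \<Rightarrow> ereal) \<Rightarrow> 'a set \<Rightarrow> ('a \<Rightarrow> 'a) \<Rightarrow> ereal" where
  "lower_index v M \<sigma> = ereal (of_nat (ram_index v M)) * (INF a \<in> {a \<in> M. 0 \<le> v a}. v (\<sigma> a - a))"

definition herbrand_phi :: "('a::field \<Rightarrow> ereal) \<Rightarrow> 'a set \<Rightarrow> 'a set \<Rightarrow> real \<Rightarrow> real" where
  "herbrand_phi v K M u =
     (\<Sum>\<sigma>\<in>embeddings K M. real_of_ereal (min (lower_index v M \<sigma>) (ereal (u + 1))))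
       / of_nat (ram_index v M) - 1"

definition herbrand_psi :: "('a::field \<Rightarrow> ereal) \<Rightarrow> 'a set \<Rightarrow> 'a set \<Rightarrow> real \<Rightarrow> real" where
  "herbrand_psi v K M x = (THE u. -1 \<le> u \<and> herbrand_phi v K M u = x)"

definition upper_breaks :: "('a::field \<Rightarrow> ereal) \<Rightarrow> 'a set \<Rightarrow> 'a set \<Rightarrow> real set" where
  "upper_breaks v K M = {x. -1 < x \<and> \<not> (herbrand_psi v K M differentiable (at x))}"

end

(* The roots r of f = X^q + X^(q-1) - t^R all have valuation -R/q, and Frobenius turns the
   relation between two roots r and T into (r/T - 1)^(q-1) (r + 1) = 1, so v(r/T - 1) = R/(q(q-1)).
   As gcd(q, R) = 1, the monomials c T^i (c in K, i < q) have valuations that are pairwise distinct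
   modulo Z. Hence f is the minimal polynomial of T, K(T)/K is totally ramified of degree q, and
   t^(-b) T^a with q b - R a = 1 is a uniformizer. The K-embedding sending T to a root r other
   than T moves every integral element by at least 1/q + R/(q(q-1)), with equality at the
   uniformizer, so all nontrivial lower indices equal 1 + R/(q-1). Herbrand's phi is therefore
   the identity up to R/(q-1) and has slope 1/q afterwards; its inverse psi has a single kink,
   at R/(q-1). *)

theory Submission
  imports Defs "HOL-Computational_Algebra.Primes"
begin

section \<open>Valuations\<close>

locale valuation =
  fixes v :: "'a::field \<Rightarrow> ereal"
  assumes is_valuation: "is_valuation v"
begin

lemma valuation_eq_infinity_iff [simp]: "v x = \<infinity> \<longleftrightarrow> x = 0"
  using is_valuation unfolding is_valuation_def by blast

lemma valuation_zero [simp]: "v 0 = \<infinity>"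
  by simp

lemma valuation_mult: "v (x * y) = v x + v y"
  using is_valuation unfolding is_valuation_def by blast

lemma valuation_add: "min (v x) (v y) \<le> v (x + y)"
  using is_valuation unfolding is_valuation_def by blast

lemma valuation_finite:
  assumes "x \<noteq> 0"
  obtains a where "v x = ereal a"
proof -
  have "v x \<noteq> \<infinity>" using assms by simp
  moreover have "v x \<noteq> - \<infinity>" using is_valuation unfolding is_valuation_def by blast
  ultimately show ?thesis using that by (cases "v x") simp_all
qed

lemma valuation_one [simp]: "v 1 = 0"
proof -
  obtain a where a: "v 1 = ereal a" by (rule valuation_finite[of 1]) auto
  have "ereal a = ereal a + ereal a" using valuation_mult[of 1 1] a by simp
  then show ?thesis using a by (simp add: zero_ereal_def)
qed

lemma valuation_uminus [simp]: "v (- x) = v x"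
proof -
  obtain a where a: "v (-1) = ereal a" by (rule valuation_finite[of "-1"]) auto
  have "ereal a + ereal a = 0" using valuation_mult[of "-1" "-1"] a by simp
  then have "v (-1) = 0" using a by (simp add: zero_ereal_def)
  then show ?thesis using valuation_mult[of "-1" x] by simp
qed

lemma valuation_diff: "min (v x) (v y) \<le> v (x - y)"
  using valuation_add[of x "- y"] by simp

lemma valuation_inverse: "v x = ereal a \<Longrightarrow> v (inverse x) = ereal (- a)"
proof -
  assume a: "v x = ereal a"
  then have x: "x \<noteq> 0" by auto
  obtain b where b: "v (inverse x) = ereal b"
    using valuation_finite[of "inverse x"] x by auto
  have "ereal a + ereal b = 0" using valuation_mult[of x "inverse x"] x a b by simp
  then show ?thesis using b by simp
qed

lemma valuation_power: "v x = ereal a \<Longrightarrow> v (x ^ n) = ereal (real n * a)"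
  by (induction n) (simp_all add: valuation_mult algebra_simps zero_ereal_def)

lemma valuation_power_nonneg: "0 \<le> v x \<Longrightarrow> 0 \<le> v (x ^ n)"
  by (induction n) (simp_all add: valuation_mult)

lemma valuation_add_strict: "v x < v y \<Longrightarrow> v (x + y) = v x"
proof -
  assume lt: "v x < v y"
  have "min (v (x + y)) (v y) \<le> v x" using valuation_diff[of "x + y" y] by simp
  then show ?thesis using valuation_add[of x y] lt by (auto simp: min_def split: if_splits)
qed

lemma valuation_sum: "(\<And>i. i \<in> I \<Longrightarrow> c \<le> v (f i)) \<Longrightarrow> c \<le> v (sum f I)"
proof (induction I rule: infinite_finite_induct)
  case (insert i I)
  then have "c \<le> min (v (f i)) (v (sum f I))" by simp
  also have "\<dots> \<le> v (f i + sum f I)" by (rule valuation_add)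
  finally show ?case using insert by simp
qed simp_all

lemma valuation_sum_distinct:
  assumes "finite I" and "\<exists>i\<in>I. f i \<noteq> 0"
    and distinct: "\<And>i j. i \<in> I \<Longrightarrow> j \<in> I \<Longrightarrow> f i \<noteq> 0 \<Longrightarrow> v (f i) = v (f j) \<Longrightarrow> i = j"
  obtains j where "j \<in> I" "f j \<noteq> 0" "v (sum f I) = v (f j)" "\<And>i. i \<in> I \<Longrightarrow> v (f j) \<le> v (f i)"
proof -
  define j where "j = arg_min_on (\<lambda>i. v (f i)) I"
  have I: "I \<noteq> {}" using assms(2) by blast
  have j: "j \<in> I" and j_min: "\<And>i. i \<in> I \<Longrightarrow> v (f j) \<le> v (f i)"
    unfolding j_def using arg_min_if_finite(1) arg_min_least \<open>finite I\<close> I by fast+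
  have fj: "f j \<noteq> 0"
  proof
    assume "f j = 0"
    obtain i where "i \<in> I" "f i \<noteq> 0" using assms(2) by blast
    then show False using j_min[of i] \<open>f j = 0\<close> by simp
  qed
  define m where "m = Min (insert \<infinity> ((\<lambda>i. v (f i)) ` (I - {j})))"
  have "v (f j) < m"
  proof -
    have "v (f j) < v (f i)" if "i \<in> I - {j}" for i
      using that j_min[of i] distinct[OF j, of i] fj by (cases "f i = 0") (auto simp: order_less_le)
    then show ?thesis unfolding m_def using \<open>finite I\<close> fj by (simp add: less_top[symmetric])
  qed
  also have "m \<le> v (sum f (I - {j}))"
    unfolding m_def using \<open>finite I\<close> by (intro valuation_sum Min_le) auto
  finally have "v (f j + sum f (I - {j})) = v (f j)" by (rule valuation_add_strict)
  then have "v (sum f I) = v (f j)" using \<open>finite I\<close> j by (simp add: sum.remove)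
  then show ?thesis using that j fj j_min by blast
qed

lemma valuation_of_nat_nonneg: "0 \<le> v (of_nat n)"
proof (induction n)
  case (Suc n)
  have "min (v 1) (v (of_nat n)) \<le> v (1 + of_nat n)" by (rule valuation_add)
  then show ?case using Suc by simp
qed simp

lemma valuation_of_nat_not_dvd:
  assumes "prime p" and "of_nat p = (0::'a)" and "\<not> p dvd n"
  shows "v (of_nat n) = 0"
proof -
  have "coprime n p" using prime_imp_coprime[OF assms(1,3)] by (simp add: coprime_commute)
  moreover have "n \<noteq> 0" using assms(3) by (metis dvd_0_right)
  ultimately obtain x y where "n * x = p * y + 1" using bezout_nat[of n p] by auto
  then have "of_nat n * of_nat x = (1::'a)"
    using assms(2) by (metis add_0 mult_zero_left of_nat_1 of_nat_add of_nat_mult)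
  then have "v (of_nat n) + v (of_nat x) = 0" using valuation_mult by (metis valuation_one)
  moreover have "v (of_nat n) \<le> v (of_nat n) + v (of_nat x)"
    using valuation_of_nat_nonneg by (simp add: add_increasing2)
  ultimately show ?thesis using valuation_of_nat_nonneg[of n] by simp
qed

lemma valuation_power_sub_one_ge:
  assumes "0 \<le> v (u - 1)"
  shows "v (u - 1) \<le> v (u ^ n - 1)"
proof -
  have "min (v (u - 1)) (v 1) \<le> v (u - 1 + 1)" by (rule valuation_add)
  then have "0 \<le> v u" using assms by (simp add: min_absorb2)
  then have "0 \<le> v (\<Sum>i<n. u ^ i)" by (intro valuation_sum valuation_power_nonneg)
  then show ?thesis by (simp add: power_diff_1_eq valuation_mult add_increasing2)
qed

text \<open>The geometric sum \<open>1 + u + \<dots> + u\<^sup>n\<^sup>-\<^sup>1\<close> is congruent to \<open>n\<close> modulo \<open>u - 1\<close>.\<close>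
lemma valuation_power_sub_one:
  assumes "0 < v (u - 1)" and "v (of_nat n) = 0"
  shows "v (u ^ n - 1) = v (u - 1)"
proof -
  have "v (u - 1) \<le> v (\<Sum>i<n. u ^ i - 1)"
    using assms(1) by (intro valuation_sum valuation_power_sub_one_ge) simp
  then have "v (of_nat n) < v (\<Sum>i<n. u ^ i - 1)" using assms by simp
  then have "v (of_nat n + (\<Sum>i<n. u ^ i - 1)) = 0" using assms(2) by (simp add: valuation_add_strict)
  moreover have "of_nat n + (\<Sum>i<n. u ^ i - 1) = (\<Sum>i<n. u ^ i)" by (simp add: sum_subtractf)
  ultimately show ?thesis by (simp add: power_diff_1_eq valuation_mult)
qed

end

section \<open>Polynomials over a subfield and simple algebraic extensions\<close>

definition poly_over :: "'a::field set \<Rightarrow> 'a poly \<Rightarrow> bool" where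
  "poly_over K P \<longleftrightarrow> (\<forall>i. coeff P i \<in> K)"

context
  fixes K :: "'a::field set"
  assumes subfield: "is_subfield K"
begin

lemma subfield_zero [simp]: "0 \<in> K"
  and subfield_one [simp]: "1 \<in> K"
  and subfield_add [simp]: "a \<in> K \<Longrightarrow> b \<in> K \<Longrightarrow> a + b \<in> K"
  and subfield_mult [simp]: "a \<in> K \<Longrightarrow> b \<in> K \<Longrightarrow> a * b \<in> K"
  and subfield_uminus [simp]: "a \<in> K \<Longrightarrow> - a \<in> K"
  and subfield_inverse [simp]: "a \<in> K \<Longrightarrow> inverse a \<in> K"
  using subfield unfolding is_subfield_def by auto

lemma subfield_diff [simp]: "a \<in> K \<Longrightarrow> b \<in> K \<Longrightarrow> a - b \<in> K"
  using subfield_add[of a "- b"] by simp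

lemma subfield_divide [simp]: "a \<in> K \<Longrightarrow> b \<in> K \<Longrightarrow> a / b \<in> K"
  by (simp add: divide_inverse)

lemma subfield_power [simp]: "a \<in> K \<Longrightarrow> a ^ n \<in> K"
  by (induction n) simp_all

lemma subfield_sum [simp]: "(\<And>i. i \<in> I \<Longrightarrow> f i \<in> K) \<Longrightarrow> sum f I \<in> K"
  by (induction I rule: infinite_finite_induct) simp_all

lemma poly_over_0 [simp]: "poly_over K 0"
  by (simp add: poly_over_def)

lemma poly_over_pCons [simp]: "poly_over K (pCons a P) \<longleftrightarrow> a \<in> K \<and> poly_over K P"
  unfolding poly_over_def by (metis coeff_pCons_0 coeff_pCons_Suc not0_implies_Suc)

lemma poly_over_add [simp]: "poly_over K P \<Longrightarrow> poly_over K Q \<Longrightarrow> poly_over K (P + Q)"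
  and poly_over_diff [simp]: "poly_over K P \<Longrightarrow> poly_over K Q \<Longrightarrow> poly_over K (P - Q)"
  and poly_over_uminus [simp]: "poly_over K P \<Longrightarrow> poly_over K (- P)"
  and poly_over_smult [simp]: "a \<in> K \<Longrightarrow> poly_over K P \<Longrightarrow> poly_over K (smult a P)"
  and poly_over_monom [simp]: "a \<in> K \<Longrightarrow> poly_over K (monom a n)"
  by (simp_all add: poly_over_def coeff_monom)

lemma poly_over_mult [simp]: "poly_over K P \<Longrightarrow> poly_over K Q \<Longrightarrow> poly_over K (P * Q)"
  by (simp add: poly_over_def coeff_mult)

lemma poly_over_remainder:
  assumes "poly_over K g" and "g \<noteq> 0" and "poly_over K P"
  obtains r where "poly_over K r" and "r = 0 \<or> degree r < degree g" and "g dvd P - r"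
proof -
  have "\<exists>r. poly_over K r \<and> (r = 0 \<or> degree r < degree g) \<and> g dvd P - r"
    using assms(3)
  proof (induction P rule: pCons_induct)
    case 0
    show ?case by (intro exI[of _ 0]) simp
  next
    case (pCons a P)
    then obtain r where r: "poly_over K r" "r = 0 \<or> degree r < degree g" "g dvd P - r"
      by auto
    define b where "b = coeff (pCons a r) (degree g) / lead_coeff g"
    define r' where "r' = pCons a r - smult b g"
    have ar: "poly_over K (pCons a r)" using pCons.prems r(1) by simp
    then have "b \<in> K" using assms(1) unfolding b_def poly_over_def by simp
    then have over: "poly_over K r'" using ar assms(1) unfolding r'_def by simp
    have "degree (pCons a r) \<le> degree g"
      using r(2) degree_pCons_le[of a r] by (cases "r = 0") auto
    then have "degree r' \<le> degree g"
      unfolding r'_def by (intro degree_diff_le) (simp_all add: degree_smult_le)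
    moreover have "coeff r' (degree g) = 0"
      using assms(2) unfolding r'_def b_def by simp
    ultimately have "r' = 0 \<or> degree r' < degree g"
      by (metis leading_coeff_0_iff nat_less_le)
    moreover have "pCons a P - r' = [:0, 1:] * (P - r) + smult b g"
      unfolding r'_def by simp
    then have "g dvd pCons a P - r'"
      using r(3) by (metis dvd_add dvd_mult dvd_refl dvd_smult)
    ultimately show ?case using over by blast
  qed
  then show ?thesis using that by blast
qed

end

definition algebraic_over :: "'a::field set \<Rightarrow> 'a \<Rightarrow> bool" where
  "algebraic_over K x \<longleftrightarrow> (\<exists>P. poly_over K P \<and> P \<noteq> 0 \<and> poly P x = 0)"

lemma separable_closure_algebraic_over: "separable_closure K \<Longrightarrow> algebraic_over K x"
  unfolding separable_closure_def algebraic_over_def poly_over_def separable_poly_def by blast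

definition poly_values :: "'a::field set \<Rightarrow> 'a \<Rightarrow> 'a set" where
  "poly_values K T = {poly P T | P. poly_over K P}"

context
  fixes K :: "'a::field set" and T :: 'a
  assumes subfield: "is_subfield K"
begin

lemma poly_values_const: "c \<in> K \<Longrightarrow> c \<in> poly_values K T"
  unfolding poly_values_def using subfield by (intro CollectI exI[of _ "[:c:]"]) simp

lemma poly_values_T: "T \<in> poly_values K T"
  unfolding poly_values_def using subfield by (intro CollectI exI[of _ "[:0, 1:]"]) simp

lemma poly_values_add_mult:
  assumes "a \<in> poly_values K T" and "b \<in> poly_values K T"
  shows "a + b \<in> poly_values K T" and "a * b \<in> poly_values K T"
proof -
  obtain P Q where PQ: "poly_over K P" "a = poly P T" "poly_over K Q" "b = poly Q T"
    using assms unfolding poly_values_def by blast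
  have "a + b = poly (P + Q) T" "poly_over K (P + Q)" using PQ subfield by simp_all
  then show "a + b \<in> poly_values K T" unfolding poly_values_def by blast
  have "a * b = poly (P * Q) T" "poly_over K (P * Q)" using PQ subfield by simp_all
  then show "a * b \<in> poly_values K T" unfolding poly_values_def by blast
qed

lemma poly_values_uminus:
  assumes "a \<in> poly_values K T"
  shows "- a \<in> poly_values K T"
proof -
  obtain P where "poly_over K P" "a = poly P T" using assms unfolding poly_values_def by blast
  then have "- a = poly (- P) T" "poly_over K (- P)" using subfield by simp_all
  then show ?thesis unfolding poly_values_def by blast
qed

lemma poly_values_poly:
  assumes "poly_over K P" and "a \<in> poly_values K T"
  shows "poly P a \<in> poly_values K T"
  using assms(1)
proof (induction P rule: pCons_induct)
  case 0
  then show ?case using poly_values_const subfield by simp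
next
  case (pCons c P)
  then have "c \<in> poly_values K T" "poly P a \<in> poly_values K T"
    using subfield poly_values_const by simp_all
  then show ?case using assms(2) by (simp add: poly_values_add_mult)
qed

text \<open>If \<open>a \<noteq> 0\<close> is a root of \<open>c + X Q\<close> with \<open>c \<noteq> 0\<close>, then \<open>a\<inverse> = - Q(a) / c\<close>.\<close>
lemma poly_values_inverse:
  assumes "a \<in> poly_values K T" and "algebraic_over K a"
  shows "inverse a \<in> poly_values K T"
proof (cases "a = 0")
  case True
  then show ?thesis using poly_values_const subfield by simp
next
  case False
  obtain Q where "poly_over K Q" "Q \<noteq> 0" "poly Q a = 0"
    using assms(2) unfolding algebraic_over_def by blast
  then show ?thesis
  proof (induction Q rule: pCons_induct)
    case (pCons c Q)
    have Q: "poly_over K Q" and c: "c \<in> K" using pCons.prems(1) subfield by simp_all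
    show ?case
    proof (cases "c = 0")
      case True
      then have "Q \<noteq> 0" "poly Q a = 0" using pCons.prems(2,3) \<open>a \<noteq> 0\<close> by simp_all
      then show ?thesis using pCons.IH Q by blast
    next
      case False
      have "a * poly Q a = - c" using pCons.prems(3) by (simp add: eq_neg_iff_add_eq_0 add.commute)
      then have "inverse a = poly Q a * (- inverse c)" using \<open>a \<noteq> 0\<close> False by (simp add: field_simps)
      moreover have "poly Q a \<in> poly_values K T" using poly_values_poly[OF Q assms(1)] .
      moreover have "- inverse c \<in> poly_values K T" using c subfield by (simp add: poly_values_const)
      ultimately show ?thesis using poly_values_add_mult(2)[of "poly Q a" "- inverse c"] by simp
    qed
  qed simp
qed

lemma is_subfield_poly_values:
  assumes "\<And>x. algebraic_over K x"
  shows "is_subfield (poly_values K T)"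
  unfolding is_subfield_def using subfield assms
  by (simp add: poly_values_const poly_values_add_mult poly_values_uminus poly_values_inverse)

lemma gen_field_eq_poly_values:
  assumes "\<And>x. algebraic_over K x"
  shows "gen_field K T = poly_values K T"
proof
  have "is_subfield (poly_values K T)" using assms by (rule is_subfield_poly_values)
  moreover have "K \<subseteq> poly_values K T" using poly_values_const by blast
  ultimately show "gen_field K T \<subseteq> poly_values K T"
    unfolding gen_field_def using poly_values_T by (intro Inter_lower) simp
next
  have in_F: "poly P T \<in> F" if F: "is_subfield F" "K \<subseteq> F" "T \<in> F" and "poly_over K P" for F P
    using \<open>poly_over K P\<close>
  proof (induction P rule: pCons_induct)
    case 0
    show ?case using subfield_zero[OF F(1)] by simp
  next
    case (pCons c P)
    have "c \<in> K" "poly_over K P" using pCons.prems subfield by simp_all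
    then have "c + T * poly P T \<in> F"
      using F(2,3) pCons.IH by (intro subfield_add[OF F(1)] subfield_mult[OF F(1)]) auto
    then show ?case by simp
  qed
  show "poly_values K T \<subseteq> gen_field K T"
  proof
    fix x assume "x \<in> poly_values K T"
    then obtain P where "poly_over K P" "x = poly P T" unfolding poly_values_def by blast
    then show "x \<in> gen_field K T" unfolding gen_field_def using in_F by blast
  qed
qed

end

lemma embeddings_add: "\<sigma> \<in> embeddings K M \<Longrightarrow> a \<in> M \<Longrightarrow> b \<in> M \<Longrightarrow> \<sigma> (a + b) = \<sigma> a + \<sigma> b"
  and embeddings_mult: "\<sigma> \<in> embeddings K M \<Longrightarrow> a \<in> M \<Longrightarrow> b \<in> M \<Longrightarrow> \<sigma> (a * b) = \<sigma> a * \<sigma> b"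
  and embeddings_fixes: "\<sigma> \<in> embeddings K M \<Longrightarrow> a \<in> K \<Longrightarrow> \<sigma> a = a"
  and embeddings_undefined: "\<sigma> \<in> embeddings K M \<Longrightarrow> x \<notin> M \<Longrightarrow> \<sigma> x = undefined"
  unfolding embeddings_def by blast+

locale simple_algebraic_extension =
  fixes K :: "'a::field set" and T :: 'a and f :: "'a poly"
  assumes subfield: "is_subfield K"
    and algebraic: "\<And>x. algebraic_over K x"
    and poly_over_f: "poly_over K f"
    and f_T: "poly f T = 0"
    and f_dvd: "\<And>P. poly_over K P \<Longrightarrow> poly P T = 0 \<Longrightarrow> f dvd P"
begin

lemma mem_gen_field_iff: "x \<in> gen_field K T \<longleftrightarrow> (\<exists>P. poly_over K P \<and> x = poly P T)"
  using gen_field_eq_poly_values[OF subfield algebraic] unfolding poly_values_def by blast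

lemma is_subfield_gen_field: "is_subfield (gen_field K T)"
  using gen_field_eq_poly_values[OF subfield algebraic] is_subfield_poly_values[OF subfield algebraic]
  by simp

lemma poly_in_gen_field: "poly_over K P \<Longrightarrow> poly P T \<in> gen_field K T"
  using mem_gen_field_iff by blast

lemma poly_eq_at_root:
  assumes "poly_over K P" "poly_over K Q" "poly P T = poly Q T" "poly f r = 0"
  shows "poly P r = poly Q r"
proof -
  have "f dvd P - Q" using assms(1-3) subfield by (intro f_dvd) simp_all
  then obtain k where "P - Q = f * k" by (elim dvdE)
  then have "poly (P - Q) r = 0" using assms(4) by simp
  then show ?thesis by simp
qed

definition root_embedding :: "'a \<Rightarrow> 'a \<Rightarrow> 'a" where
  "root_embedding r x =
     (if x \<in> gen_field K T then poly (SOME P. poly_over K P \<and> x = poly P T) r else undefined)"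

lemma root_embedding_poly:
  assumes "poly_over K P" and "poly f r = 0"
  shows "root_embedding r (poly P T) = poly P r"
proof -
  define P' where "P' = (SOME P'. poly_over K P' \<and> poly P T = poly P' T)"
  have "poly_over K P' \<and> poly P T = poly P' T"
    unfolding P'_def by (rule someI[of _ P]) (simp add: assms(1))
  then have "poly P' r = poly P r" using poly_eq_at_root[of P' P r] assms by simp
  then show ?thesis
    unfolding root_embedding_def P'_def[symmetric] using poly_in_gen_field[OF assms(1)] by simp
qed

lemma root_embedding_in_embeddings:
  assumes "poly f r = 0"
  shows "root_embedding r \<in> embeddings K (gen_field K T)"
  unfolding embeddings_def
proof (intro CollectI conjI ballI allI impI)
  fix a b assume "a \<in> gen_field K T" "b \<in> gen_field K T"
  then obtain P Q where P: "poly_over K P" "a = poly P T" and Q: "poly_over K Q" "b = poly Q T"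
    using mem_gen_field_iff by blast
  have "poly_over K (P + Q)" "poly_over K (P * Q)" using P Q subfield by simp_all
  then show "root_embedding r (a + b) = root_embedding r a + root_embedding r b"
    and "root_embedding r (a * b) = root_embedding r a * root_embedding r b"
    using root_embedding_poly[OF _ assms] P Q by (metis poly_add poly_mult)+
next
  fix a assume "a \<in> K"
  then show "root_embedding r a = a"
    using root_embedding_poly[of "[:a:]", OF _ assms] subfield by simp
qed (simp add: root_embedding_def)

lemma embedding_poly:
  assumes \<sigma>: "\<sigma> \<in> embeddings K (gen_field K T)" and "poly_over K P"
  shows "\<sigma> (poly P T) = poly P (\<sigma> T)"
  using assms(2)
proof (induction P rule: pCons_induct)
  case 0
  show ?case using embeddings_fixes[OF \<sigma>] subfield by simp
next
  case (pCons c P)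
  have c: "c \<in> K" and P: "poly_over K P" using pCons.prems subfield by simp_all
  have in_M: "c \<in> gen_field K T" "T \<in> gen_field K T" "poly P T \<in> gen_field K T"
    "T * poly P T \<in> gen_field K T"
    using poly_in_gen_field[of "[:c:]"] poly_in_gen_field[of "[:0, 1:]"] poly_in_gen_field[OF P]
      poly_in_gen_field[of "pCons 0 P"] c P subfield by simp_all
  have "\<sigma> (c + T * poly P T) = c + \<sigma> T * \<sigma> (poly P T)"
    using in_M c by (simp add: embeddings_add[OF \<sigma>] embeddings_mult[OF \<sigma>] embeddings_fixes[OF \<sigma>])
  then show ?case using pCons.IH[OF P] by simp
qed

lemma embedding_T_root:
  assumes "\<sigma> \<in> embeddings K (gen_field K T)"
  shows "poly f (\<sigma> T) = 0"
  using embedding_poly[OF assms poly_over_f] embeddings_fixes[OF assms] subfield f_T by simp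

lemma embeddings_eq: "embeddings K (gen_field K T) = root_embedding ` {r. poly f r = 0}"
proof
  show "root_embedding ` {r. poly f r = 0} \<subseteq> embeddings K (gen_field K T)"
    using root_embedding_in_embeddings by blast
next
  show "embeddings K (gen_field K T) \<subseteq> root_embedding ` {r. poly f r = 0}"
  proof
    fix \<sigma> assume \<sigma>: "\<sigma> \<in> embeddings K (gen_field K T)"
    have "\<sigma> x = root_embedding (\<sigma> T) x" for x
    proof (cases "x \<in> gen_field K T")
      case True
      then obtain P where "poly_over K P" "x = poly P T" using mem_gen_field_iff by blast
      then show ?thesis
        using embedding_poly[OF \<sigma>] root_embedding_poly embedding_T_root[OF \<sigma>] by simp
    next
      case False
      then show ?thesis using embeddings_undefined[OF \<sigma>] by (simp add: root_embedding_def)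
    qed
    then show "\<sigma> \<in> root_embedding ` {r. poly f r = 0}" using embedding_T_root[OF \<sigma>] by blast
  qed
qed

lemma root_embedding_T: "poly f r = 0 \<Longrightarrow> root_embedding r T = r"
  using root_embedding_poly[of "[:0, 1:]" r] subfield by simp

lemma inj_on_root_embedding: "inj_on root_embedding {r. poly f r = 0}"
proof (rule inj_onI)
  fix r s assume r: "r \<in> {r. poly f r = 0}" and s: "s \<in> {r. poly f r = 0}"
    and eq: "root_embedding r = root_embedding s"
  have "r = root_embedding r T" using r root_embedding_T by simp
  also have "\<dots> = s" using s root_embedding_T unfolding eq by simp
  finally show "r = s" .
qed

lemma root_embedding_self:
  assumes "x \<in> gen_field K T"
  shows "root_embedding T x = x"
proof -
  obtain P where "poly_over K P" "x = poly P T" using assms mem_gen_field_iff by blast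
  then show ?thesis using root_embedding_poly f_T by simp
qed

end

lemma separable_poly_linear_factor:
  assumes sep: "separable_poly P" and P: "P = [:-r, 1:] * Q"
  shows "separable_poly Q" and "poly Q r \<noteq> 0"
proof -
  have dP: "pderiv P = [:-r, 1:] * pderiv Q + Q * pderiv [:-r, 1:]"
    unfolding P by (rule pderiv_mult)
  show "separable_poly Q"
    unfolding separable_poly_def
  proof (intro conjI allI impI)
    show "Q \<noteq> 0" using sep P by (auto simp: separable_poly_def)
    fix D assume D: "D dvd Q \<and> D dvd pderiv Q"
    have "D dvd [:-r, 1:] * pderiv Q" by (rule dvd_mult) (use D in blast)
    moreover have "D dvd Q * pderiv [:-r, 1:]" by (rule dvd_mult2) (use D in blast)
    ultimately have "D dvd pderiv P" unfolding dP by (rule dvd_add)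
    moreover have "D dvd P" unfolding P by (rule dvd_mult) (use D in blast)
    ultimately show "degree D = 0" using sep unfolding separable_poly_def by blast
  qed
  show "poly Q r \<noteq> 0"
  proof
    assume "poly Q r = 0"
    then have "[:-r, 1:] dvd Q" by (simp add: poly_eq_0_iff_dvd)
    then have "[:-r, 1:] dvd Q * pderiv [:-r, 1:]" by (rule dvd_mult2)
    then have "[:-r, 1:] dvd pderiv P" unfolding dP by (intro dvd_add dvd_triv_left)
    moreover have "[:-r, 1:] dvd P" unfolding P by (rule dvd_triv_left)
    ultimately have "degree [:-r, 1:] = 0" using sep unfolding separable_poly_def by blast
    then show False by simp
  qed
qed

lemma card_roots_separable_poly:
  fixes K :: "'a::field set" and P :: "'a poly"
  assumes K: "separable_closure K" and "separable_poly P"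
  shows "card {x. poly P x = 0} = degree P"
  using assms(2)
proof (induction "degree P" arbitrary: P)
  case 0
  obtain a where "P = [:a:]" using 0(1)[symmetric] by (rule degree_eq_zeroE)
  moreover have "P \<noteq> 0" using 0(2) by (simp add: separable_poly_def)
  ultimately show ?case by simp
next
  case (Suc n)
  have "\<forall>P :: 'a poly. 1 \<le> degree P \<and> separable_poly P \<longrightarrow> (\<exists>x. poly P x = 0)"
    using K unfolding separable_closure_def by blast
  moreover have "1 \<le> degree P" using Suc.hyps(2) by simp
  ultimately obtain r where "poly P r = 0" using Suc.prems by blast
  then obtain Q where P: "P = [:-r, 1:] * Q" by (auto simp: poly_eq_0_iff_dvd elim!: dvdE)
  have Q: "separable_poly Q" "poly Q r \<noteq> 0"
    using separable_poly_linear_factor[OF Suc.prems P] by simp_all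
  then have "Q \<noteq> 0" by (simp add: separable_poly_def)
  then have "degree P = degree [:-r, 1:] + degree Q" unfolding P by (intro degree_mult_eq) auto
  then have "degree Q = n" using Suc.hyps(2) by simp
  have "{x. poly P x = 0} = insert r {x. poly Q x = 0}" unfolding P by auto
  moreover have "finite {x. poly Q x = 0}" using \<open>Q \<noteq> 0\<close> by (rule poly_roots_finite)
  ultimately have "card {x. poly P x = 0} = Suc (card {x. poly Q x = 0})" using Q(2) by simp
  then show ?case
    using Suc.hyps(1)[OF \<open>degree Q = n\<close>[symmetric] Q(1)] Suc.hyps(2) \<open>degree Q = n\<close> by simp
qed

section \<open>Herbrand functions with a single break\<close>

definition broken_line :: "real \<Rightarrow> real \<Rightarrow> real \<Rightarrow> real" where
  "broken_line b c x = (if x \<le> b then x else b + c * (x - b))"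

lemma broken_line_inverse: "0 < c \<Longrightarrow> broken_line b (1 / c) (broken_line b c x) = x"
  by (auto simp: broken_line_def mult_le_0_iff)

lemma broken_line_ge:
  assumes "-1 \<le> x" and "-1 \<le> b" and "0 < c"
  shows "-1 \<le> broken_line b c x"
proof (cases "x \<le> b")
  case False
  then have "0 \<le> c * (x - b)" using assms(3) by simp
  then show ?thesis using assms(2) False by (simp add: broken_line_def)
qed (use assms(1) in \<open>simp add: broken_line_def\<close>)

lemma differentiable_broken_line:
  assumes "x \<noteq> b"
  shows "broken_line b c differentiable (at x)"
proof (cases "x < b")
  case True
  have "((\<lambda>y. y) has_real_derivative 1) (at x)" by (rule DERIV_ident)
  then have "(broken_line b c has_real_derivative 1) (at x)"
    by (rule has_field_derivative_transform_within_open[of _ _ _ "{..<b}"])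
      (use True in \<open>auto simp: broken_line_def\<close>)
  then show ?thesis by (auto simp: real_differentiable_def)
next
  case False
  with assms have "b < x" by simp
  have "((\<lambda>y. b + c * (y - b)) has_real_derivative c) (at x)"
    by (auto intro!: derivative_eq_intros)
  then have "(broken_line b c has_real_derivative c) (at x)"
    by (rule has_field_derivative_transform_within_open[of _ _ _ "{b<..}"])
      (use \<open>b < x\<close> in \<open>auto simp: broken_line_def\<close>)
  then show ?thesis by (auto simp: real_differentiable_def)
qed

text \<open>A derivative \<open>D\<close> at the break would make both \<open>y \<mapsto> g y - y\<close> and \<open>y \<mapsto> g y - c y\<close>
  locally minimal there, forcing \<open>D = 1\<close> and \<open>D = c\<close>.\<close>
lemma not_differentiable_broken_line:
  assumes "1 < c"
  shows "\<not> broken_line b c differentiable (at b)"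
proof
  assume "broken_line b c differentiable (at b)"
  then obtain D where D: "(broken_line b c has_real_derivative D) (at b)"
    by (auto simp: real_differentiable_def)
  have d1: "((\<lambda>y. broken_line b c y - y) has_real_derivative D - 1) (at b)"
    using D DERIV_ident by (rule DERIV_diff)
  have m1: "broken_line b c b - b \<le> broken_line b c y - y" for y
  proof (cases "y \<le> b")
    case False
    then have "0 \<le> (c - 1) * (y - b)" using assms by simp
    then show ?thesis using False by (simp add: broken_line_def algebra_simps)
  qed (simp add: broken_line_def)
  have "D - 1 = 0" by (rule DERIV_local_min[OF d1, of 1]) (simp_all add: m1)
  have d2: "((\<lambda>y. broken_line b c y - c * y) has_real_derivative D - c * 1) (at b)"
    using D DERIV_cmult[OF DERIV_ident] by (rule DERIV_diff)
  have m2: "broken_line b c b - c * b \<le> broken_line b c y - c * y" for y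
  proof (cases "y \<le> b")
    case True
    then have "0 \<le> (c - 1) * (b - y)" using assms by simp
    then show ?thesis using True by (simp add: broken_line_def algebra_simps)
  qed (simp add: broken_line_def algebra_simps)
  have "D - c * 1 = 0" by (rule DERIV_local_min[OF d2, of 1]) (simp_all add: m2)
  then show False using \<open>D - 1 = 0\<close> assms by simp
qed

lemma herbrand_phi_one_break:
  assumes "finite (embeddings K M)" and "card (embeddings K M) = ram_index v M"
    and "\<sigma>\<^sub>0 \<in> embeddings K M" and "lower_index v M \<sigma>\<^sub>0 = \<infinity>"
    and "\<And>\<sigma>. \<sigma> \<in> embeddings K M \<Longrightarrow> \<sigma> \<noteq> \<sigma>\<^sub>0 \<Longrightarrow> lower_index v M \<sigma> = ereal (1 + b)"
  shows "herbrand_phi v K M u = broken_line b (1 / real (ram_index v M)) u"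
proof -
  define e where "e = ram_index v M"
  define g where "g \<sigma> = real_of_ereal (min (lower_index v M \<sigma>) (ereal (u + 1)))" for \<sigma>
  have "(\<Sum>\<sigma>\<in>embeddings K M. g \<sigma>) = g \<sigma>\<^sub>0 + (\<Sum>\<sigma>\<in>embeddings K M - {\<sigma>\<^sub>0}. g \<sigma>)"
    using assms(1,3) by (simp add: sum.remove)
  also have "g \<sigma>\<^sub>0 = u + 1" using assms(4) by (simp add: g_def)
  also have "(\<Sum>\<sigma>\<in>embeddings K M - {\<sigma>\<^sub>0}. g \<sigma>) = (\<Sum>\<sigma>\<in>embeddings K M - {\<sigma>\<^sub>0}. min (1 + b) (u + 1))"
    using assms(5) by (intro sum.cong) (simp_all add: g_def flip: ereal_min)
  also have "\<dots> = real (e - 1) * min (1 + b) (u + 1)"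
    using assms(1-3) by (simp add: e_def)
  finally have sum: "(\<Sum>\<sigma>\<in>embeddings K M. g \<sigma>) = u + 1 + real (e - 1) * min (1 + b) (u + 1)" .
  have "1 \<le> e" using assms(1-3) unfolding e_def by (metis card_0_eq empty_iff less_one not_le)
  then show ?thesis
    unfolding herbrand_phi_def g_def[symmetric] sum e_def[symmetric]
    by (auto simp: broken_line_def min_def of_nat_diff field_simps)
qed

lemma upper_breaks_one_break:
  assumes phi: "\<And>u. herbrand_phi v K M u = broken_line b (1 / e) u" and "-1 < b" and "1 < e"
  shows "upper_breaks v K M = {b}"
proof -
  have psi: "herbrand_psi v K M x = broken_line b e x" if "-1 \<le> x" for x
    unfolding herbrand_psi_def
  proof (rule the_equality)
    show "-1 \<le> broken_line b e x \<and> herbrand_phi v K M (broken_line b e x) = x"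
      using that assms(2,3) by (simp add: phi broken_line_ge broken_line_inverse)
  next
    fix u assume "-1 \<le> u \<and> herbrand_phi v K M u = x"
    then show "u = broken_line b e x"
      using broken_line_inverse[of "1 / e" b u] assms(3) by (simp add: phi)
  qed
  have transfer: "g differentiable (at x)"
    if f: "f differentiable (at x)" and x: "-1 < x" and eq: "\<And>y. -1 < y \<Longrightarrow> f y = g y"
    for f g :: "real \<Rightarrow> real" and x
  proof -
    obtain D where "(f has_derivative D) (at x)" using f unfolding differentiable_def by blast
    then have "(g has_derivative D) (at x)"
      by (rule has_derivative_transform_within_open[of _ _ _ _ "{-1<..}"]) (use x eq in auto)
    then show ?thesis unfolding differentiable_def by blast
  qed
  have "herbrand_psi v K M differentiable (at x) \<longleftrightarrow> broken_line b e differentiable (at x)"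
    if "-1 < x" for x
    using transfer[of "herbrand_psi v K M" x "broken_line b e"]
      transfer[of "broken_line b e" x "herbrand_psi v K M"] that psi by auto
  then show ?thesis
    unfolding upper_breaks_def
    using assms(2,3) differentiable_broken_line not_differentiable_broken_line by auto
qed

lemma ram_index_eqI:
  assumes "0 < e" and "v ` (M - {0}) = range (\<lambda>k::int. ereal (of_int k / of_nat e))"
  shows "ram_index v M = e"
  unfolding ram_index_def
proof (rule the_equality)
  show "0 < e \<and> v ` (M - {0}) = range (\<lambda>k::int. ereal (of_int k / of_nat e))"
    using assms by simp
next
  fix e' assume e': "0 < e' \<and> v ` (M - {0}) = range (\<lambda>k::int. ereal (of_int k / of_nat e'))"
  then have eq: "range (\<lambda>k::int. ereal (of_int k / of_nat e'))
      = range (\<lambda>k::int. ereal (of_int k / of_nat e))"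
    using assms(2) by simp
  have dvd: "a dvd b"
    if pos: "0 < a" "0 < b"
      and mem: "ereal (1 / real a) \<in> range (\<lambda>k::int. ereal (of_int k / of_nat b))"
    for a b :: nat
  proof -
    obtain k where "1 / real a = of_int k / real b" using mem by auto
    then have "real b = of_int k * real a" using pos by (simp add: field_simps)
    then have "int b = k * int a" by (metis of_int_eq_iff of_int_mult of_int_of_nat_eq)
    then show ?thesis by (metis dvd_triv_right int_dvd_int_iff)
  qed
  have "ereal (1 / real e') \<in> range (\<lambda>k::int. ereal (of_int k / of_nat e))"
    unfolding eq[symmetric] by (rule range_eqI[of _ _ 1]) simp
  moreover have "ereal (1 / real e) \<in> range (\<lambda>k::int. ereal (of_int k / of_nat e'))"
    unfolding eq by (rule range_eqI[of _ _ 1]) simp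
  ultimately show "e' = e" using dvd e' assms(1) by (intro dvd_antisym) simp_all
qed

section \<open>The extension \<open>T\<^sup>q + T\<^sup>q\<^sup>-\<^sup>1 = t\<^sup>R\<close>\<close>

locale KR_extension =
  fixes v :: "'a::field \<Rightarrow> ereal" and K :: "'a set" and p q R :: nat and t T :: 'a
  assumes prime_p: "prime p" and char_p: "of_nat p = (0::'a)"
    and separable_closure: "separable_closure K" and is_valuation_v: "is_valuation v"
    and normalized: "normalized_discrete_on v K"
    and t_in_K: "t \<in> K" and val_t: "v t = -1"
    and q_power: "\<exists>k\<ge>1. q = p ^ k" and R_pos: "0 < R" and p_not_dvd_R: "\<not> p dvd R"
    and T_root: "T ^ q + T ^ (q - 1) = t ^ R"
begin

sublocale valuation v
  by (rule valuation.intro) (rule is_valuation_v)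

lemma subfield: "is_subfield K"
  using separable_closure unfolding separable_closure_def by blast

lemma p_dvd_q: "p dvd q"
  using q_power by auto

lemma q_ge_2: "2 \<le> q"
proof -
  obtain k where "1 \<le> k" "q = p ^ k" using q_power by auto
  then show ?thesis
    using prime_ge_2_nat[OF prime_p] power_increasing[of 1 k p] by simp
qed

lemma coprime_q_R: "coprime q R"
proof -
  obtain k where "q = p ^ k" using q_power by auto
  then show ?thesis using prime_imp_coprime[OF prime_p p_not_dvd_R] by simp
qed

lemma CHAR_eq: "CHAR('a) = p"
proof -
  have "CHAR('a) dvd p" using char_p by (simp add: of_nat_eq_0_iff_char_dvd)
  moreover have "\<forall>m. m dvd p \<longrightarrow> m = 1 \<or> m = p" using prime_p by (simp add: prime_nat_iff)
  ultimately have "CHAR('a) = 1 \<or> CHAR('a) = p" by blast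
  then show ?thesis using CHAR_not_1' by auto
qed

lemma frobenius_diff: "(x - y) ^ q = x ^ q - (y :: 'a) ^ q"
proof -
  obtain k where "q = p ^ k" using q_power by auto
  then have "((x - y) + y) ^ q = (x - y) ^ q + y ^ q"
    using prime_p CHAR_eq by (intro freshmans_dream'[where n = k]) simp_all
  then show ?thesis by (simp add: algebra_simps)
qed

definition \<nu> :: real where "\<nu> = - real R / real q"

definition \<rho> :: real where "\<rho> = real R / (real q * (real q - 1))"

lemma \<nu>_neg: "\<nu> < 0" and \<rho>_pos: "0 < \<rho>"
  using q_ge_2 R_pos by (simp_all add: \<nu>_def \<rho>_def)

definition f :: "'a poly" where "f = monom 1 q + monom 1 (q - 1) - [:t ^ R:]"

lemma poly_f: "poly f x = x ^ (q - 1) * (x + 1) - t ^ R"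
proof -
  obtain m where m: "q = Suc m" using q_ge_2 by (cases q) auto
  show ?thesis unfolding f_def by (simp add: poly_monom m algebra_simps)
qed

lemma f_T: "poly f T = 0"
  using T_root by (simp add: f_def poly_monom)

lemma t_nonzero: "t \<noteq> 0"
proof
  assume "t = 0"
  then have "v t = \<infinity>" by simp
  then show False using val_t by (simp add: one_ereal_def)
qed

lemma val_t_power: "v (t ^ R) = ereal (- real R)"
  using valuation_power[OF val_t[unfolded one_ereal_def uminus_ereal.simps]] by simp

lemma val_root: assumes "poly f r = 0" shows "v r = ereal \<nu>"
proof -
  have eq: "r ^ (q - 1) * (r + 1) = t ^ R" using assms by (simp add: poly_f)
  have "r \<noteq> 0"
  proof
    assume "r = 0"
    then show False using eq q_ge_2 t_nonzero by (simp add: power_0_left)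
  qed
  then obtain a where a: "v r = ereal a" using valuation_finite by blast
  have val_eq: "v (t ^ R) = v (r ^ (q - 1)) + v (r + 1)"
    by (simp flip: eq add: valuation_mult)
  have "a < 0"
  proof (rule ccontr)
    assume "\<not> a < 0"
    then have "0 \<le> v r" using a by simp
    then have "0 \<le> v (r ^ (q - 1))" "0 \<le> v (r + 1)"
      using valuation_power_nonneg valuation_add[of r 1] by auto
    then have "0 \<le> v (t ^ R)" using val_eq by simp
    then show False using val_t_power R_pos by simp
  qed
  then have "v (r + 1) = ereal a" using a valuation_add_strict[of r 1] by simp
  then have "ereal (- real R) = ereal (real (q - 1) * a + a)"
    using val_eq val_t_power valuation_power[OF a] by simp
  then have "real q * a = - real R" using q_ge_2 by (simp add: of_nat_diff algebra_simps)
  then show ?thesis using a q_ge_2 by (simp add: \<nu>_def field_simps)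
qed

lemma root_nonzero: "poly f r = 0 \<Longrightarrow> r \<noteq> 0"
  using val_root by force

lemma T_nonzero: "T \<noteq> 0"
  using root_nonzero f_T by blast

lemma val_root_plus_one: "poly f r = 0 \<Longrightarrow> v (r + 1) = ereal \<nu>"
  using val_root \<nu>_neg valuation_add_strict[of r 1] by simp

lemma val_root_power: "poly f r = 0 \<Longrightarrow> v (r ^ n) = ereal (real n * \<nu>)"
  using val_root valuation_power by simp

text \<open>With \<open>u = r/T\<close>, Frobenius and \<open>r\<^sup>q + r\<^sup>q\<^sup>-\<^sup>1 = T\<^sup>q + T\<^sup>q\<^sup>-\<^sup>1\<close> give
  \<open>(u - 1)\<^sup>q\<^sup>-\<^sup>1 (r + 1) = 1\<close>.\<close>
lemma val_ratio_sub_one: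
  assumes "poly f r = 0" and "r \<noteq> T"
  shows "v (r / T - 1) = ereal \<rho>"
proof -
  obtain m where m: "q = Suc m" using q_ge_2 by (cases q) auto
  define u where "u = r / T - 1"
  have r: "r = (u + 1) * T" and "u \<noteq> 0"
    using assms(2) T_nonzero by (simp_all add: u_def field_simps)
  have "r ^ (q - 1) * (r + 1) = T ^ (q - 1) * (T + 1)" using assms(1) f_T by (simp add: poly_f)
  then have roots: "r * r ^ m + r ^ m = T * T ^ m + T ^ m" by (simp add: m algebra_simps)
  have "(r * r ^ m - T * T ^ m) * (r + 1) - (r - T) * T ^ m
      = r * ((r * r ^ m + r ^ m) - (T * T ^ m + T ^ m))"
    by (simp add: algebra_simps)
  moreover have "(r - T) ^ q = r * r ^ m - T * T ^ m" using frobenius_diff by (simp add: m)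
  ultimately have "(r - T) ^ q * (r + 1) = (r - T) * T ^ m" using roots by simp
  then have "u * T ^ q * (u ^ m * (r + 1)) = u * T ^ q * 1"
    unfolding m by (simp add: r algebra_simps)
  then have "u ^ m * (r + 1) = 1" using \<open>u \<noteq> 0\<close> T_nonzero by simp
  then have "v (u ^ m) + v (r + 1) = 0" using valuation_mult by (metis valuation_one)
  moreover obtain a where a: "v u = ereal a" using valuation_finite[OF \<open>u \<noteq> 0\<close>] by blast
  ultimately have "real m * a + \<nu> = 0"
    using valuation_power[OF a] val_root_plus_one[OF assms(1)] by simp
  moreover have "real m = real q - 1" using m by simp
  ultimately have "(real q - 1) * a = - \<nu>" by simp
  then have "a = \<rho>" using q_ge_2 by (simp add: \<nu>_def \<rho>_def field_simps)
  then show ?thesis using a u_def by simp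
qed

lemma val_ratio_sub_one_ge: "poly f r = 0 \<Longrightarrow> ereal \<rho> \<le> v (r / T - 1)"
  using val_ratio_sub_one T_nonzero by (cases "r = T") auto

lemma q_dvd_mult_R: "int q dvd a * int R \<Longrightarrow> int q dvd a"
  using coprime_q_R by (simp add: coprime_dvd_mult_left_iff)

text \<open>As \<open>gcd q R = 1\<close>, the congruence class of \<open>k\<close> modulo \<open>q\<close> determines \<open>i\<close> modulo \<open>q\<close>.\<close>
lemma val_monomial:
  assumes "c \<in> K" and "c \<noteq> 0"
  obtains k :: int
  where "v (c * T ^ i) = ereal (of_int k / real q)" and "int q dvd k + int i * int R"
proof -
  obtain z :: int where z: "v c = ereal (of_int z)"
    using normalized assms unfolding normalized_discrete_on_def by blast
  have "v (c * T ^ i) = ereal (of_int z + real i * \<nu>)"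
    using z val_root_power[OF f_T] by (simp add: valuation_mult)
  also have "of_int z + real i * \<nu> = of_int (z * int q - int i * int R) / real q"
    using q_ge_2 by (simp add: \<nu>_def field_simps)
  finally show ?thesis using that[of "z * int q - int i * int R"] by simp
qed

lemma val_monomial_inj:
  assumes "c \<in> K" "c \<noteq> 0" "d \<in> K" "d \<noteq> 0" "i < q" "j < q"
    and eq: "v (c * T ^ i) = v (d * T ^ j)"
  shows "i = j"
proof -
  obtain k where k: "v (c * T ^ i) = ereal (of_int k / real q)" "int q dvd k + int i * int R"
    using val_monomial[OF assms(1,2)] by blast
  obtain l where l: "v (d * T ^ j) = ereal (of_int l / real q)" "int q dvd l + int j * int R"
    using val_monomial[OF assms(3,4)] by blast
  have "k = l" using eq k(1) l(1) q_ge_2 by simp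
  then have "int q dvd (int i - int j) * int R"
    using dvd_diff[OF k(2) l(2)] by (simp add: algebra_simps)
  then have dvd: "int q dvd int i - int j" by (rule q_dvd_mult_R)
  show "i = j"
  proof (rule ccontr)
    assume "i \<noteq> j"
    then have "\<bar>int q\<bar> \<le> \<bar>int i - int j\<bar>" using dvd by (intro dvd_imp_le_int) auto
    then show False using assms(5,6) by linarith
  qed
qed

lemma val_monomial_ge:
  assumes "c \<in> K" "c \<noteq> 0" "0 < i" "i < q" and "0 \<le> v (c * T ^ i)"
  shows "ereal (1 / real q) \<le> v (c * T ^ i)"
proof -
  obtain k where k: "v (c * T ^ i) = ereal (of_int k / real q)" "int q dvd k + int i * int R"
    using val_monomial[OF assms(1,2)] by blast
  have "0 \<le> k" using assms(5) k(1) q_ge_2 by (simp add: zero_le_divide_iff)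
  moreover have "k \<noteq> 0"
  proof
    assume "k = 0"
    then have "int q dvd int i" using k(2) q_dvd_mult_R[of "int i"] by simp
    then show False using assms(3,4) by (simp add: nat_dvd_not_less)
  qed
  ultimately have "1 \<le> k" by simp
  then show ?thesis using k(1) q_ge_2 by (simp add: divide_right_mono)
qed

lemma val_poly_T:
  assumes "poly_over K P" and "P \<noteq> 0" and "degree P < q"
  obtains j where "coeff P j \<noteq> 0" and "v (poly P T) = v (coeff P j * T ^ j)"
    and "\<And>i. v (coeff P j * T ^ j) \<le> v (coeff P i * T ^ i)"
proof -
  have K: "coeff P i \<in> K" for i using assms(1) by (simp add: poly_over_def)
  have ex: "\<exists>i\<in>{..degree P}. coeff P i * T ^ i \<noteq> 0"
    using assms(2) T_nonzero by (intro bexI[of _ "degree P"]) simp_all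
  have dist: "i = j"
    if "i \<in> {..degree P}" "j \<in> {..degree P}" "coeff P i * T ^ i \<noteq> 0"
      and "v (coeff P i * T ^ i) = v (coeff P j * T ^ j)" for i j
  proof -
    have "coeff P j \<noteq> 0" using that(3,4) by (metis mult_eq_0_iff valuation_eq_infinity_iff)
    then show ?thesis
      using that assms(3) K by (intro val_monomial_inj[of "coeff P i" "coeff P j"]) auto
  qed
  obtain j where "j \<in> {..degree P}" "coeff P j * T ^ j \<noteq> 0"
    and sum: "v (\<Sum>i\<le>degree P. coeff P i * T ^ i) = v (coeff P j * T ^ j)"
    and min: "\<And>i. i \<in> {..degree P} \<Longrightarrow> v (coeff P j * T ^ j) \<le> v (coeff P i * T ^ i)"
    by (rule valuation_sum_distinct[of "{..degree P}" "\<lambda>i. coeff P i * T ^ i"])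
      (simp, use ex in blast, use dist in blast, blast)
  have "v (coeff P j * T ^ j) \<le> v (coeff P i * T ^ i)" for i
    using min[of i] by (cases "i \<le> degree P") (simp_all add: coeff_eq_0)
  moreover have "v (poly P T) = v (coeff P j * T ^ j)" using sum by (simp add: poly_altdef)
  ultimately show ?thesis using that[of j] \<open>coeff P j * T ^ j \<noteq> 0\<close> by simp
qed

lemma poly_T_nonzero: "poly_over K P \<Longrightarrow> P \<noteq> 0 \<Longrightarrow> degree P < q \<Longrightarrow> poly P T \<noteq> 0"
  by (rule val_poly_T) (use T_nonzero in auto)

lemma poly_over_f: "poly_over K f"
  using subfield t_in_K by (simp add: f_def)

lemma degree_f: "degree f = q"
proof -
  have "coeff f i =
      (if i = q then 1 else 0) + (if i = q - 1 then 1 else 0) - (if i = 0 then t ^ R else 0)" for i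
    by (simp add: f_def coeff_monom monom_0[symmetric] del: monom_0)
  then show ?thesis using q_ge_2 by (intro antisym degree_le le_degree) auto
qed

lemma f_nonzero: "f \<noteq> 0"
  using degree_f q_ge_2 by auto

lemma reduce_mod_f:
  assumes "poly_over K P"
  obtains r where "poly_over K r" and "degree r < q" and "poly r T = poly P T" and "f dvd P - r"
proof -
  obtain r where r: "poly_over K r" "r = 0 \<or> degree r < degree f" "f dvd P - r"
    using poly_over_remainder[OF subfield poly_over_f f_nonzero assms] by blast
  from r(3) obtain k where "P - r = f * k" by (elim dvdE)
  then have "poly (P - r) T = 0" using f_T by simp
  moreover have "degree r < q" using r(2) degree_f q_ge_2 by auto
  ultimately show ?thesis using that r(1,3) by simp
qed

lemma f_dvd:
  assumes "poly_over K P" and "poly P T = 0"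
  shows "f dvd P"
proof -
  obtain r where r: "poly_over K r" "degree r < q" "poly r T = 0" "f dvd P - r"
    using reduce_mod_f[OF assms(1)] assms(2) by metis
  then have "r = 0" using poly_T_nonzero by blast
  then show ?thesis using r(4) by simp
qed

sublocale simple_algebraic_extension K T f
  using subfield separable_closure_algebraic_over[OF separable_closure] poly_over_f f_T f_dvd
  by unfold_locales

lemma gen_field_reduced:
  assumes "x \<in> gen_field K T"
  obtains P where "poly_over K P" and "degree P < q" and "x = poly P T"
proof -
  obtain P where P: "poly_over K P" "x = poly P T" using assms mem_gen_field_iff by blast
  then show ?thesis using reduce_mod_f[OF P(1)] that by metis
qed

text \<open>\<open>f' = -X\<^sup>q\<^sup>-\<^sup>2\<close> because \<open>q = 0\<close> in \<open>K\<close>, so a common divisor of \<open>f\<close> and \<open>f'\<close> divides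
  \<open>X\<^sup>q + X\<^sup>q\<^sup>-\<^sup>1 - f = t\<^sup>R\<close>.\<close>
lemma separable_f: "separable_poly f"
  unfolding separable_poly_def
proof (intro conjI allI impI)
  show "f \<noteq> 0" by (rule f_nonzero)
  have q0: "of_nat q = (0::'a)" using char_p p_dvd_q by (auto elim!: dvdE)
  then have q1: "of_nat (q - 1) = (-1::'a)" using q_ge_2 by (simp add: of_nat_diff)
  have "pderiv f = monom (-1) (q - 2)"
    unfolding f_def using q0 q1
    by (simp add: pderiv_add pderiv_diff pderiv_monom pderiv_pCons diff_diff_left numeral_2_eq_2)
  moreover have "q - 2 + 2 = q" "q - 2 + 1 = q - 1" using q_ge_2 by simp_all
  ultimately have "monom 1 q + monom 1 (q - 1) = pderiv f * (- (monom 1 2 + monom 1 1))"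
    by (simp add: mult_monom distrib_left minus_monom)
  fix D assume D: "D dvd f \<and> D dvd pderiv f"
  then have "D dvd (monom 1 q + monom 1 (q - 1)) - f"
    using \<open>monom 1 q + monom 1 (q - 1) = _\<close> by (metis dvd_diff dvd_mult2)
  then have "D dvd [:t ^ R:]" by (simp add: f_def)
  then have "degree D \<le> degree [:t ^ R:]" using t_nonzero by (intro dvd_imp_degree_le) simp_all
  then show "degree D = 0" by simp
qed

lemma finite_roots_f: "finite {r. poly f r = 0}"
  using f_nonzero by (rule poly_roots_finite)

lemma card_embeddings: "card (embeddings K (gen_field K T)) = q"
  using card_roots_separable_poly[OF separable_closure separable_f] degree_f
  by (simp add: embeddings_eq card_image inj_on_root_embedding)

lemma finite_embeddings: "finite (embeddings K (gen_field K T))"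
  using finite_roots_f by (simp add: embeddings_eq)

text \<open>Bezout gives \<open>q \<beta> = R \<alpha> + 1\<close>; then \<open>t\<^sup>-\<^sup>\<beta> T\<^sup>\<alpha>\<close> has valuation \<open>\<beta> - \<alpha> R/q = 1/q\<close>, and
  \<open>p\<close> does not divide \<open>\<alpha>\<close> because it divides \<open>q\<close>.\<close>
lemma exists_uniformizer:
  obtains s \<alpha> where "s \<in> K" and "\<not> p dvd \<alpha>" and "v (s * T ^ \<alpha>) = ereal (1 / real q)"
proof -
  have "q \<noteq> 0" using q_ge_2 by simp
  then obtain \<beta> \<alpha> where "q * \<beta> = R * \<alpha> + gcd q R" using bezout_nat by blast
  then have \<alpha>\<beta>: "q * \<beta> = R * \<alpha> + 1" using coprime_q_R by simp
  have "\<not> p dvd \<alpha>"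
  proof
    assume "p dvd \<alpha>"
    then have "p dvd q * \<beta> - R * \<alpha>" using p_dvd_q by simp
    then show False using \<alpha>\<beta> prime_p by simp
  qed
  have "v (inverse t) = ereal 1"
    using valuation_inverse[of t "-1"] val_t by (simp add: one_ereal_def)
  then have "v (inverse t ^ \<beta> * T ^ \<alpha>) = ereal (real \<beta> + real \<alpha> * \<nu>)"
    using valuation_power val_root_power[OF f_T] by (simp add: valuation_mult)
  also have "real \<beta> + real \<alpha> * \<nu> = 1 / real q"
  proof -
    have "real q * real \<beta> = real R * real \<alpha> + 1"
      using \<alpha>\<beta> by (metis of_nat_1 of_nat_add of_nat_mult)
    then show ?thesis using q_ge_2 by (simp add: \<nu>_def field_simps)
  qed
  finally show ?thesis using that[of "inverse t ^ \<beta>" \<alpha>] t_in_K subfield \<open>\<not> p dvd \<alpha>\<close> by simp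
qed

lemma val_gen_field: "v ` (gen_field K T - {0}) = range (\<lambda>k::int. ereal (of_int k / of_nat q))"
proof (intro antisym subsetI)
  fix e assume "e \<in> v ` (gen_field K T - {0})"
  then obtain x where x: "x \<in> gen_field K T" "x \<noteq> 0" "e = v x" by blast
  obtain P where P: "poly_over K P" "degree P < q" "x = poly P T"
    using x(1) by (rule gen_field_reduced)
  then have "P \<noteq> 0" using x(2) by auto
  then obtain j where "coeff P j \<noteq> 0" "v x = v (coeff P j * T ^ j)"
    using val_poly_T[OF P(1) _ P(2)] P(3) by metis
  moreover have "coeff P j \<in> K" using P(1) by (simp add: poly_over_def)
  ultimately obtain k where "e = ereal (of_int k / of_nat q)"
    using val_monomial[of "coeff P j" j] x(3) by auto
  then show "e \<in> range (\<lambda>k::int. ereal (of_int k / of_nat q))" by blast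
next
  fix e assume "e \<in> range (\<lambda>k::int. ereal (of_int k / of_nat q))"
  then obtain k :: int where k: "e = ereal (of_int k / real q)" by auto
  obtain s \<alpha> where "s \<in> K" "v (s * T ^ \<alpha>) = ereal (1 / real q)" using exists_uniformizer by blast
  moreover define \<pi> where "\<pi> = s * T ^ \<alpha>"
  ultimately have \<pi>: "\<pi> \<in> gen_field K T" "v \<pi> = ereal (1 / real q)"
    using poly_in_gen_field[of "monom s \<alpha>"] subfield by (simp_all add: poly_monom mult.commute)
  show "e \<in> v ` (gen_field K T - {0})"
  proof (cases "0 \<le> k")
    case True
    have "v (\<pi> ^ nat k) = e" using valuation_power[OF \<pi>(2)] True k by simp
    moreover have "\<pi> ^ nat k \<in> gen_field K T - {0}"
      using \<pi> is_subfield_gen_field by (auto simp: subfield_power)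
    ultimately show ?thesis by blast
  next
    case False
    have "v (inverse \<pi> ^ nat (- k)) = e"
      using valuation_power[OF valuation_inverse[OF \<pi>(2)]] False k by simp
    moreover have "inverse \<pi> ^ nat (- k) \<in> gen_field K T - {0}"
      using \<pi> is_subfield_gen_field by (auto simp: subfield_power)
    ultimately show ?thesis by blast
  qed
qed

lemma ram_index_gen_field: "ram_index v (gen_field K T) = q"
  using q_ge_2 val_gen_field by (intro ram_index_eqI) simp_all

lemma root_embedding_sub:
  assumes "poly f r = 0" and "poly_over K P"
  shows "root_embedding r (poly P T) - poly P T
    = (\<Sum>i\<le>degree P. coeff P i * T ^ i * ((r / T) ^ i - 1))"
proof -
  have "coeff P i * r ^ i - coeff P i * T ^ i = coeff P i * T ^ i * ((r / T) ^ i - 1)" for i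
    using T_nonzero by (simp add: power_divide field_simps)
  then show ?thesis
    using root_embedding_poly[OF assms(2,1)] by (simp add: poly_altdef flip: sum_subtractf)
qed

text \<open>Each term \<open>c\<^sub>i T\<^sup>i ((r/T)\<^sup>i - 1)\<close> with \<open>i \<ge> 1\<close> gains at least \<open>\<rho>\<close> over
  \<open>v(c\<^sub>i T\<^sup>i) \<ge> v(a) \<ge> 0\<close>, and \<open>v(c\<^sub>i T\<^sup>i) \<notin> \<int>\<close>.\<close>
lemma val_root_embedding_sub_ge:
  assumes r: "poly f r = 0" and a: "a \<in> gen_field K T" "0 \<le> v a"
  shows "ereal (1 / real q + \<rho>) \<le> v (root_embedding r a - a)"
proof -
  obtain P where P: "poly_over K P" "degree P < q" "a = poly P T"
    using a(1) by (rule gen_field_reduced)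
  show ?thesis
  proof (cases "P = 0")
    case True
    then show ?thesis using P(3) root_embedding_sub[OF r P(1)] by simp
  next
    case False
    obtain j where "v a = v (coeff P j * T ^ j)"
      and min: "\<And>i. v (coeff P j * T ^ j) \<le> v (coeff P i * T ^ i)"
      using val_poly_T[OF P(1) False P(2)] P(3) by metis
    have "ereal (1 / real q + \<rho>) \<le> v (coeff P i * T ^ i * ((r / T) ^ i - 1))"
      if "i \<le> degree P" for i
    proof (cases "i = 0 \<or> coeff P i = 0")
      case False
      have "0 \<le> v (coeff P i * T ^ i)" using min[of i] a(2) \<open>v a = _\<close> by simp
      then have "ereal (1 / real q) \<le> v (coeff P i * T ^ i)"
        using False that P(1,2) by (intro val_monomial_ge) (auto simp: poly_over_def)
      moreover have "ereal \<rho> \<le> v ((r / T) ^ i - 1)"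
      proof -
        have "ereal \<rho> \<le> v (r / T - 1)" by (rule val_ratio_sub_one_ge[OF r])
        moreover have "0 \<le> ereal \<rho>" using \<rho>_pos by simp
        ultimately show ?thesis
          using valuation_power_sub_one_ge[of "r / T" i] by (meson order_trans)
      qed
      ultimately have
        "ereal (1 / real q) + ereal \<rho> \<le> v (coeff P i * T ^ i) + v ((r / T) ^ i - 1)"
        by (rule add_mono)
      also have "\<dots> = v (coeff P i * T ^ i * ((r / T) ^ i - 1))"
        by (rule valuation_mult[symmetric])
      finally show ?thesis by simp
    qed auto
    then show ?thesis unfolding P(3) root_embedding_sub[OF r P(1)] by (intro valuation_sum) simp
  qed
qed

lemma val_root_embedding_sub_uniformizer:
  assumes "poly f r = 0" and "r \<noteq> T"
  obtains \<pi> where "\<pi> \<in> gen_field K T" and "0 \<le> v \<pi>"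
    and "v (root_embedding r \<pi> - \<pi>) = ereal (1 / real q + \<rho>)"
proof -
  obtain s \<alpha> where s: "s \<in> K" and "\<not> p dvd \<alpha>"
    and v_\<pi>: "v (s * T ^ \<alpha>) = ereal (1 / real q)"
    using exists_uniformizer by blast
  have P: "poly_over K (monom s \<alpha>)" using s subfield by simp
  have "s * r ^ \<alpha> - s * T ^ \<alpha> = s * T ^ \<alpha> * ((r / T) ^ \<alpha> - 1)"
    using T_nonzero by (simp add: power_divide field_simps)
  moreover have "root_embedding r (s * T ^ \<alpha>) = s * r ^ \<alpha>"
    using root_embedding_poly[OF P assms(1)] by (simp add: poly_monom mult.commute)
  ultimately have "root_embedding r (s * T ^ \<alpha>) - s * T ^ \<alpha> = s * T ^ \<alpha> * ((r / T) ^ \<alpha> - 1)"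
    by simp
  moreover have "v ((r / T) ^ \<alpha> - 1) = ereal \<rho>"
    using val_ratio_sub_one[OF assms] \<rho>_pos
      valuation_of_nat_not_dvd[OF prime_p char_p \<open>\<not> p dvd \<alpha>\<close>]
    by (simp add: valuation_power_sub_one)
  ultimately have "v (root_embedding r (s * T ^ \<alpha>) - s * T ^ \<alpha>) = ereal (1 / real q + \<rho>)"
    using v_\<pi> by (simp add: valuation_mult)
  moreover have "s * T ^ \<alpha> \<in> gen_field K T"
    using poly_in_gen_field[OF P] by (simp add: poly_monom mult.commute)
  ultimately show ?thesis using that v_\<pi> by simp
qed

lemma lower_index_root_embedding:
  assumes "poly f r = 0" and "r \<noteq> T"
  shows "lower_index v (gen_field K T) (root_embedding r) = ereal (1 + real R / (real q - 1))"
proof -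
  let ?I = "INF a \<in> {a \<in> gen_field K T. 0 \<le> v a}. v (root_embedding r a - a)"
  obtain \<pi> where "\<pi> \<in> gen_field K T" "0 \<le> v \<pi>"
    and \<pi>: "v (root_embedding r \<pi> - \<pi>) = ereal (1 / real q + \<rho>)"
    using val_root_embedding_sub_uniformizer[OF assms] by blast
  then have "?I \<le> v (root_embedding r \<pi> - \<pi>)" by (intro INF_lower) simp
  then have "?I \<le> ereal (1 / real q + \<rho>)" using \<pi> by simp
  moreover have "ereal (1 / real q + \<rho>) \<le> ?I"
    using val_root_embedding_sub_ge[OF assms(1)] by (auto intro: INF_greatest)
  ultimately have "?I = ereal (1 / real q + \<rho>)" by (rule antisym)
  moreover have "real q * (1 / real q + \<rho>) = 1 + real R / (real q - 1)"
    using q_ge_2 by (simp add: \<rho>_def field_simps)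
  ultimately show ?thesis unfolding lower_index_def ram_index_gen_field by simp
qed

lemma lower_index_root_embedding_T: "lower_index v (gen_field K T) (root_embedding T) = \<infinity>"
proof -
  have "\<infinity> \<le> (INF a \<in> {a \<in> gen_field K T. 0 \<le> v a}. v (root_embedding T a - a))"
    by (rule INF_greatest) (simp add: root_embedding_self)
  then show ?thesis unfolding lower_index_def ram_index_gen_field using q_ge_2 by simp
qed

theorem upper_breaks_gen_field: "upper_breaks v K (gen_field K T) = {real R / (real q - 1)}"
proof (rule upper_breaks_one_break)
  show "herbrand_phi v K (gen_field K T) u = broken_line (real R / (real q - 1)) (1 / real q) u"
    for u
  proof (subst herbrand_phi_one_break[where \<sigma>\<^sub>0 = "root_embedding T"])
    fix \<sigma> assume "\<sigma> \<in> embeddings K (gen_field K T)" "\<sigma> \<noteq> root_embedding T"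
    then obtain r where "poly f r = 0" "r \<noteq> T" "\<sigma> = root_embedding r"
      unfolding embeddings_eq by blast
    then show "lower_index v (gen_field K T) \<sigma> = ereal (1 + real R / (real q - 1))"
      using lower_index_root_embedding by simp
  qed (simp_all add: finite_embeddings card_embeddings ram_index_gen_field f_T
      root_embedding_in_embeddings lower_index_root_embedding_T)
next
  have "0 \<le> real R / (real q - 1)" using q_ge_2 by (simp add: zero_le_divide_iff)
  then show "-1 < real R / (real q - 1)" by linarith
qed (use q_ge_2 in simp)

end

theorem lemma6:
  fixes v :: "'a::field \<Rightarrow> ereal" and K :: "'a set" and p q R :: nat and t T :: 'a
  assumes "prime p" and "of_nat p = (0::'a)"
    and "separable_closure K" and "is_valuation v"
    and "normalized_discrete_on v K" and "complete_on v K" and "residue_alg_closed v K"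
    and "t \<in> K" and "v t = -1"
    and "\<exists>k\<ge>1. q = p ^ k" and "0 < R" and "\<not> p dvd R"
    and "T ^ q + T ^ (q - 1) = t ^ R"
  shows "upper_breaks v K (gen_field K T) = {real R / (real q - 1)}"
proof -
  interpret KR_extension v K p q R t T
    by (rule KR_extension.intro) (fact assms)+
  show ?thesis by (rule upper_breaks_gen_field)
qed

end
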